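(* Let $n\ge2$ and let $A$ be an $n\times n$ binary matrix with zero diagonal. The facets-pairing structure $\mathcal{F}_A$ on $\mathcal{C}^n$ is perfect if and only if $A$ is a Bott matrix.
   Context: $\mathcal{C}^n=\{x\in\mathbb{R}^n: -\tfrac14\le x_i\le\tfrac14\}$; $\mathbf{F}(i)$, $\mathbf{F}(-i)$ ($1\le i\le n$) are the facets in $\{x_i=\tfrac14\}$, $\{x_i=-\tfrac14\}$. Binary matrices have entries in $\mathbb{Z}_2$; $A^i_k$ denotes the $(i,k)$ entry viewed as $0$ or $1$. A Bott matrix is a binary square matrix conjugate by a permutation matrix to a strictly upper triangular binary matrix. $\mathcal{F}_A$ pairs $\mathbf{F}(j)$ with $\mathbf{F}(-j)$ via $\tau^A_j:\mathbf{F}(j)\to\mathbf{F}(-j)$, $\tau^A_j(x)=y$ with $y_{|j|}=-x_{|j|}$ and $y_k=(-1)^{A^{|j|}_k}x_k$ for $k\ne|j|$. A composition $\tau^A_{k_m}\circ\dots\circ\tau^A_{k_1}$ applied to a proper face $f$ is valid if $f\subset\mathbf{F}(k_1)$ and $\tau^A_{k_i}\circ\dots\circ\tau^A_{k_1}(f)\subset\mathbf{F}(k_{i+1})$ for $1\le i<m$ ($m=0$ allowed). The face family $\widehat f$ is the set of faces $\tau^A_{k_m}\circ\dots\circ\tau^A_{k_1}(f)$ over all valid compositions. $\mathcal{F}_A$ is perfect if for every proper face $f$ of codimension $s$, $\widehat f$ has exactly $2^s$ elements. *)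

theory Defs
  imports "HOL-Analysis.Analysis" "HOL-Library.Z2"
begin

text \<open>The cube C^n = [-1/4,1/4]^n, with coordinates indexed by a finite type 'n
  (n = CARD('n)). Binary matrices have entries in the field Z_2 (type bit).\<close>

definition cube :: "(real ^ 'n) set" where
  "cube = {x. \<forall>i. - (1/4) \<le> x $ i \<and> x $ i \<le> 1/4}"

text \<open>Signed indices: (i, True) stands for i, (i, False) for -i.
  facet (i,True) = F(i) in {x_i = 1/4}, facet (i,False) = F(-i) in {x_i = -1/4}.\<close>

definition facet :: "'n \<times> bool \<Rightarrow> (real ^ 'n) set" where
  "facet j = {x \<in> cube. x $ fst j = (if snd j then 1/4 else - (1/4))}"

text \<open>tau^A_j depends only on |j| = fst j.\<close>
definition tau :: "bit ^ 'n ^ 'n \<Rightarrow> 'n \<Rightarrow> real ^ 'n \<Rightarrow> real ^ 'n" where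
  "tau A i x = (\<chi> k. if k = i then - (x $ k)
                      else (if A $ i $ k = 1 then - (x $ k) else x $ k))"

text \<open>Composition tau_{k_m} o ... o tau_{k_1} applied to a face f, for the list [k_1,...,k_m].\<close>
fun compose_tau :: "bit ^ 'n ^ 'n \<Rightarrow> ('n \<times> bool) list \<Rightarrow> (real ^ 'n) set \<Rightarrow> (real ^ 'n) set" where
  "compose_tau A [] f = f"
| "compose_tau A (k # ks) f = compose_tau A ks (tau A (fst k) ` f)"

fun valid_comp :: "bit ^ 'n ^ 'n \<Rightarrow> ('n \<times> bool) list \<Rightarrow> (real ^ 'n) set \<Rightarrow> bool" where
  "valid_comp A [] f = True"
| "valid_comp A (k # ks) f = (f \<subseteq> facet k \<and> valid_comp A ks (tau A (fst k) ` f))"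

definition face_family :: "bit ^ 'n ^ 'n \<Rightarrow> (real ^ 'n) set \<Rightarrow> (real ^ 'n) set set" where
  "face_family A f = {compose_tau A ks f | ks. valid_comp A ks f}"

definition proper_face :: "(real ^ 'n) set \<Rightarrow> bool" where
  "proper_face f \<longleftrightarrow> f face_of cube \<and> f \<noteq> {} \<and> f \<noteq> cube"

definition codim :: "(real ^ 'n) set \<Rightarrow> nat" where
  "codim f = nat (int CARD('n) - aff_dim f)"

definition perfect :: "bit ^ 'n ^ 'n \<Rightarrow> bool" where
  "perfect A \<longleftrightarrow> (\<forall>f. proper_face f \<longrightarrow> card (face_family A f) = 2 ^ codim f)"

text \<open>Bott matrix: conjugate by a permutation matrix to a strictly upper triangular matrix.
  Indices of 'n are identified with 0..<n via a bijection sigma; P A P^T has (i,k) entry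
  A (sigma i) (sigma k).\<close>
definition bott_matrix :: "bit ^ 'n ^ 'n \<Rightarrow> bool" where
  "bott_matrix A \<longleftrightarrow> (\<exists>\<sigma> :: nat \<Rightarrow> 'n. bij_betw \<sigma> {0..<CARD('n)} UNIV \<and>
      (\<forall>i < CARD('n). \<forall>k < CARD('n). A $ (\<sigma> i) $ (\<sigma> k) \<noteq> 0 \<longrightarrow> i < k))"

end

theory Submission
  imports Defs
begin

text \<open>
  Every nonempty face of the cube is of the form face_at T q: the points agreeing with a
  vertex-like point q on a set T of coordinates, where q_i = \<plusminus>1/4 for i \<in> T; its
  codimension is card T.  Each pairing map tau_i is the sign change of the coordinates
  row_flip A i = {i} \<union> {k. A_ik = 1}, so applying a valid composition to face_at T q gives
  face_at T (flip q X), where X ranges over the subsets of T reachable from {} by taking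
  symmetric differences with the sets row_flip A i \<inter> T, i \<in> T (the set reach A T).
  These faces are pairwise distinct, hence the face family has card (reach A T) elements
  and A is perfect iff reach A T = Pow T for every nonempty T.

  For a Bott matrix every pattern is reachable: clear the coordinates of a target pattern
  in increasing order of the triangular ordering.  Conversely, a matrix with zero diagonal
  that is not Bott contains an induced cycle T (each row has exactly one entry 1 in T);
  there every move changes exactly two coordinates of T, so only patterns of even size
  are reachable and reach A T \<noteq> Pow T.
\<close>

lemma cube_iff: "x \<in> cube \<longleftrightarrow> (\<forall>i. \<bar>x $ i\<bar> \<le> 1/4)"
proof -
  have "\<And>i. (- (1/4) \<le> x $ i \<and> x $ i \<le> 1/4) = (\<bar>x $ i\<bar> \<le> (1/4::real))" by linarith
  thus ?thesis unfolding cube_def by simp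
qed

lemma quarter_product:
  fixes a x :: real
  assumes "\<bar>a\<bar> = 1/4" "\<bar>x\<bar> \<le> 1/4"
  shows "a * x \<le> 1/16" and "a * x = 1/16 \<longleftrightarrow> x = a"
proof -
  have bounds: "a = 1/4 \<or> a = - (1/4)" "- (1/4) \<le> x" "x \<le> 1/4" using assms by linarith+
  then show "a * x \<le> 1/16" by (elim disjE; hypsubst; linarith)
  from bounds show "a * x = 1/16 \<longleftrightarrow> x = a" by (elim disjE; hypsubst; auto)
qed

lemma abs_eq_quarter: "\<bar>v :: real\<bar> = 1/4 \<Longrightarrow> v = (if v > 0 then 1/4 else - (1/4))"
  by (cases "v < 0") (auto simp: abs_if)

lemma abs_midpoint_quarter:
  fixes a b :: real
  assumes "\<bar>a\<bar> \<le> 1/4" "\<bar>b\<bar> \<le> 1/4"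
  shows "\<bar>(a + b) / 2\<bar> = 1/4 \<longleftrightarrow> \<bar>b\<bar> = 1/4 \<and> a = b"
  using assms by (auto simp: abs_if split: if_splits)

definition flip :: "real ^ 'n \<Rightarrow> 'n set \<Rightarrow> real ^ 'n" where
  "flip q X = (\<chi> k. if k \<in> X then - (q $ k) else q $ k)"

lemma flip_nth [simp]: "flip q X $ k = (if k \<in> X then - (q $ k) else q $ k)"
  by (simp add: flip_def)

lemma flip_in_cube [simp]: "flip q X \<in> cube \<longleftrightarrow> q \<in> cube"
  by (simp add: cube_iff)

lemma flip_flip [simp]: "flip (flip q X) Y = flip q (sym_diff X Y)"
  by (auto simp: vec_eq_iff)

lemma flip_empty [simp]: "flip q {} = q"
  by (simp add: vec_eq_iff)

definition face_at :: "'n set \<Rightarrow> real ^ 'n \<Rightarrow> (real ^ 'n) set" where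
  "face_at T q = {y \<in> cube. \<forall>i\<in>T. y $ i = q $ i}"

definition signed :: "'n set \<Rightarrow> real ^ 'n \<Rightarrow> bool" where
  "signed T q \<longleftrightarrow> q \<in> cube \<and> (\<forall>i\<in>T. \<bar>q $ i\<bar> = 1/4)"

lemma signed_flip [simp]: "signed T (flip q X) \<longleftrightarrow> signed T q"
  by (simp add: signed_def)

lemma convex_cube: "convex cube"
proof -
  have "{x. - (1/4) \<le> x \<and> x \<le> 1/4} = {- (1/4) .. (1/4::real)}" by auto
  then show ?thesis
    unfolding cube_def by (intro convex_box_cart) simp
qed

text \<open>face_at T q is the intersection of the cube with the supporting hyperplanes q_i x_i = 1/16.\<close>
lemma face_at_face_of:
  fixes q :: "real ^ 'n"
  assumes "signed T q"
  shows "face_at T q face_of cube"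
proof -
  define H where "H i = cube \<inter> {x. axis i (q $ i) \<bullet> x = 1/16}" for i
  have H_face: "H i face_of cube" if "i \<in> T" for i
    unfolding H_def
  proof (rule face_of_Int_supporting_hyperplane_le[OF convex_cube])
    fix x :: "real ^ 'n" assume "x \<in> cube"
    then show "axis i (q $ i) \<bullet> x \<le> 1/16"
      using assms that quarter_product(1) by (auto simp: inner_axis' signed_def cube_iff)
  qed
  have H_eq: "H i = {y \<in> cube. y $ i = q $ i}" if "i \<in> T" for i
    using assms that quarter_product(2) by (auto simp: H_def inner_axis' signed_def cube_iff)
  show ?thesis
  proof (cases "T = {}")
    case True
    then show ?thesis by (simp add: face_at_def face_of_refl convex_cube)
  next
    case False
    have "face_at T q = \<Inter> (H ` T)"
      using False H_eq by (auto simp: face_at_def)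
    then show ?thesis using False H_face by (auto intro!: face_of_Inter)
  qed
qed

text \<open>Conversely, a nonempty face equals face_at (tight p) p for a point p of the face with the
  fewest tight coordinates.  First, any face through p contains face_at (tight p) p, since
  p lies in the interior of a segment from any point y of it to a point slightly beyond p
  (possible because the coordinates outside tight p have slack).\<close>
definition tight :: "real ^ 'n \<Rightarrow> 'n set" where
  "tight p = {i. \<bar>p $ i\<bar> = 1/4}"

lemma signed_tight: "p \<in> cube \<Longrightarrow> signed (tight p) p"
  by (simp add: signed_def tight_def)

lemma extend_beyond_tight:
  assumes pc: "p \<in> cube" and y: "y \<in> face_at (tight p) p"
  obtains d where "d > 0" "p + d *\<^sub>R (p - y) \<in> cube"
proof -
  have yc: "y \<in> cube" using y by (simp add: face_at_def)
  have slack: "\<bar>p $ i\<bar> < 1/4" if "i \<notin> tight p" for i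
    using that pc by (auto simp: tight_def cube_iff less_le)
  define d where "d = Min (insert 1 ((\<lambda>i. 1/4 - \<bar>p $ i\<bar>) ` (- tight p)))"
  have d_pos: "d > 0" unfolding d_def using slack by auto
  have d_le: "d \<le> 1/4 - \<bar>p $ i\<bar>" if "i \<notin> tight p" for i
    unfolding d_def using that by (auto intro!: Min_le)
  have "\<bar>(p + d *\<^sub>R (p - y)) $ i\<bar> \<le> 1/4" for i
  proof (cases "i \<in> tight p")
    case True
    then have "y $ i = p $ i" using y by (simp add: face_at_def)
    then show ?thesis using pc by (simp add: cube_iff)
  next
    case False
    have "\<bar>p $ i\<bar> \<le> 1/4" "\<bar>y $ i\<bar> \<le> 1/4" using pc yc by (auto simp: cube_iff)
    then have "\<bar>p $ i - y $ i\<bar> \<le> 1" by arith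
    then have "d * \<bar>p $ i - y $ i\<bar> \<le> d" using d_pos by (simp add: mult_le_cancel_left1)
    moreover have "\<bar>p $ i + d * (p $ i - y $ i)\<bar> \<le> \<bar>p $ i\<bar> + d * \<bar>p $ i - y $ i\<bar>"
      using d_pos abs_triangle_ineq[of "p $ i" "d * (p $ i - y $ i)"] by (simp add: abs_mult)
    ultimately show ?thesis using d_le[OF False] by simp
  qed
  then show ?thesis using that d_pos by (simp add: cube_iff)
qed

lemma face_at_tight_subset:
  assumes F: "f face_of cube" and p: "p \<in> f"
  shows "face_at (tight p) p \<subseteq> f"
proof
  fix y assume y: "y \<in> face_at (tight p) p"
  show "y \<in> f"
  proof (cases "y = p")
    case True
    then show ?thesis using p by simp
  next
    case False
    have pc: "p \<in> cube" using F p face_of_imp_subset by blast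
    have yc: "y \<in> cube" using y by (simp add: face_at_def)
    obtain d where d_pos: "d > 0" and zc: "p + d *\<^sub>R (p - y) \<in> cube"
      using extend_beyond_tight[OF pc y] by blast
    define z where "z = p + d *\<^sub>R (p - y)"
    have "p \<in> open_segment y z"
      unfolding in_segment
    proof
      show "y \<noteq> z"
      proof
        assume "y = z"
        then have "(1 + d) *\<^sub>R (p - y) = 0" by (simp add: z_def algebra_simps)
        then show False using d_pos False by simp
      qed
      define u where "u = 1 / (1 + d)"
      have "u * (1 + d) = 1" using d_pos by (simp add: u_def)
      then have "p = (1 - u) *\<^sub>R y + u *\<^sub>R z"
        by (simp add: z_def algebra_simps flip: scaleR_add_left)
      moreover have "0 < u" "u < 1" using d_pos by (simp_all add: u_def)
      ultimately show "\<exists>u. 0 < u \<and> u < 1 \<and> p = (1 - u) *\<^sub>R y + u *\<^sub>R z" by blast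
    qed
    then show ?thesis using face_ofD[OF F _ yc zc[folded z_def] p] by blast
  qed
qed

text \<open>Second, every point x of a convex set agrees with p on tight p when p minimises the
  number of tight coordinates: otherwise the midpoint of x and p has fewer of them.\<close>
lemma tight_midpoint:
  assumes "x \<in> cube" "p \<in> cube"
  shows "tight (midpoint x p) = {i \<in> tight p. x $ i = p $ i}"
  using assms abs_midpoint_quarter by (auto simp: tight_def midpoint_def cube_iff)

lemma subset_face_at_tight:
  assumes "convex f" "f \<subseteq> cube" "p \<in> f"
    and least: "\<And>x. x \<in> f \<Longrightarrow> card (tight p) \<le> card (tight x)"
  shows "f \<subseteq> face_at (tight p) p"
proof
  fix x assume x: "x \<in> f"
  have xc: "x \<in> cube" and pc: "p \<in> cube" using assms x by auto
  have "midpoint x p \<in> f"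
    using convexD[OF assms(1) x assms(3), of "1/2" "1/2"] by (simp add: midpoint_def scaleR_add_right)
  then have "card (tight p) \<le> card (tight (midpoint x p))" by (rule least)
  moreover have "tight (midpoint x p) \<subseteq> tight p" using tight_midpoint[OF xc pc] by auto
  ultimately have "tight (midpoint x p) = tight p" by (metis card_seteq finite)
  then have "\<forall>i\<in>tight p. x $ i = p $ i" using tight_midpoint[OF xc pc] by auto
  then show "x \<in> face_at (tight p) p" using xc by (simp add: face_at_def)
qed

lemma face_of_cube_eq_face_at:
  assumes F: "f face_of cube" and "f \<noteq> {}"
  obtains T q where "signed T q" "f = face_at T q"
proof -
  obtain p where p: "p \<in> f" "\<And>x. x \<in> f \<Longrightarrow> card (tight p) \<le> card (tight x)"
    using assms(2) ex_has_least_nat[of "\<lambda>x. x \<in> f" _ "\<lambda>x. card (tight x)"] by blast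
  have "f \<subseteq> cube" "convex f" using F by (auto dest: face_of_imp_subset face_of_imp_convex)
  then have "f = face_at (tight p) p"
    using subset_face_at_tight[of f p] face_at_tight_subset[OF F] p by blast
  moreover have "signed (tight p) p" using p(1) \<open>f \<subseteq> cube\<close> by (auto intro: signed_tight)
  ultimately show ?thesis using that by blast
qed

text \<open>The face face_at T q is a translate of the coordinate subspace spanned by the
  coordinates outside T, so its codimension is card T.\<close>
lemma aff_dim_face_at:
  fixes q :: "real ^ 'n"
  assumes sg: "signed T q"
  shows "aff_dim (face_at T q) = int CARD('n) - int (card T)"
proof -
  define q0 :: "real ^ 'n" where "q0 = (\<chi> k. if k \<in> T then q $ k else 0)"
  define V :: "(real ^ 'n) set" where "V = {x. \<forall>i. i \<notin> - T \<longrightarrow> x $ i = 0}"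
  define G where "G = (+) (- q0) ` face_at T q"
  have qc: "q \<in> cube" using sg by (simp add: signed_def)
  have "q0 \<in> face_at T q" using qc by (auto simp: face_at_def q0_def cube_iff)
  then have aff_G: "aff_dim (face_at T q) = int (dim G)"
    unfolding G_def by (intro aff_dim_eq_dim hull_inc)
  have dim_V: "dim V = card (- T)"
    using dim_substandard_cart[where 'a=real and 'n='n, of "- T"] dim_vec_eq[of V] by (simp add: V_def)
  have "G \<subseteq> V" by (auto simp: G_def V_def face_at_def q0_def)
  moreover have "V \<subseteq> span G"
  proof
    fix v assume v: "v \<in> V"
    define c where "c = 4 * norm v + 4"
    have c_pos: "c > 0" by (simp add: c_def add_nonneg_pos)
    define w where "w = q0 + (1/c) *\<^sub>R v"
    have "\<bar>w $ i\<bar> \<le> 1/4" for i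
    proof (cases "i \<in> T")
      case True
      then show ?thesis using v qc by (simp add: w_def q0_def V_def cube_iff)
    next
      case False
      have "\<bar>v $ i\<bar> / c \<le> 1/4"
        using component_le_norm_cart[of v i] c_pos by (simp add: c_def field_simps)
      then show ?thesis using False c_pos by (simp add: w_def q0_def abs_mult)
    qed
    moreover have "w $ i = q $ i" if "i \<in> T" for i using v that by (simp add: w_def q0_def V_def)
    ultimately have "- q0 + w \<in> G" by (simp add: G_def face_at_def cube_iff)
    then have "c *\<^sub>R (- q0 + w) \<in> span G" by (intro span_mul span_base)
    moreover have "c *\<^sub>R (- q0 + w) = v" using c_pos by (simp add: w_def)
    ultimately show "v \<in> span G" by simp
  qed
  ultimately have "dim G = dim V" using dim_subset dim_span by (metis le_antisym)
  moreover have "card (- T) = CARD('n) - card T" "card T \<le> CARD('n)"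
    by (simp_all add: Compl_eq_Diff_UNIV card_Diff_subset card_mono)
  ultimately show ?thesis using aff_G dim_V by simp
qed

lemma codim_face_at: "signed T q \<Longrightarrow> codim (face_at T q) = card T"
  by (simp add: codim_def aff_dim_face_at)

lemma proper_face_iff:
  "proper_face f \<longleftrightarrow> (\<exists>T q. signed T q \<and> T \<noteq> {} \<and> f = face_at T q)"
proof
  assume "proper_face f"
  then have f: "f face_of cube" "f \<noteq> {}" "f \<noteq> cube" by (auto simp: proper_face_def)
  then obtain T q where "signed T q" "f = face_at T q" using face_of_cube_eq_face_at by metis
  moreover have "T \<noteq> {}" using f(3) \<open>f = face_at T q\<close> by (auto simp: face_at_def)
  ultimately show "\<exists>T q. signed T q \<and> T \<noteq> {} \<and> f = face_at T q" by blast
next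
  assume "\<exists>T q. signed T q \<and> T \<noteq> {} \<and> f = face_at T q"
  then obtain T q i where sg: "signed T q" and i: "i \<in> T" and f: "f = face_at T q" by blast
  have "q \<in> cube" "\<bar>q $ i\<bar> = 1/4" using sg i by (auto simp: signed_def)
  then have "q \<in> f" "flip q {i} \<in> cube - f" using i by (auto simp: f face_at_def)
  then show "proper_face f" using face_at_face_of[OF sg] f by (auto simp: proper_face_def)
qed

definition row_flip :: "bit ^ 'n ^ 'n \<Rightarrow> 'n \<Rightarrow> 'n set" where
  "row_flip A i = {k. k = i \<or> A $ i $ k = 1}"

lemma tau_eq_flip: "tau A i x = flip x (row_flip A i)"
  by (simp add: tau_def row_flip_def vec_eq_iff)

lemma image_flip_face_at: "(\<lambda>x. flip x X) ` face_at T q = face_at T (flip q X)"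
proof -
  have "flip x X \<in> face_at T q \<longleftrightarrow> x \<in> face_at T (flip q X)" for x
    by (auto simp: face_at_def)
  moreover have "flip (flip x X) X = x" for x by (simp add: vec_eq_iff)
  ultimately show ?thesis by (metis (no_types, lifting) image_iff subsetI subset_antisym)
qed

lemma face_at_flip_restrict: "face_at T (flip q X) = face_at T (flip q (X \<inter> T))"
  by (auto simp: face_at_def)

lemma image_tau_face_at:
  "tau A i ` face_at T (flip q X) = face_at T (flip q (sym_diff X (row_flip A i \<inter> T)))"
proof -
  have "tau A i ` face_at T (flip q X) = face_at T (flip q (sym_diff X (row_flip A i)))"
    by (simp add: tau_eq_flip image_flip_face_at)
  also have "\<dots> = face_at T (flip q (sym_diff X (row_flip A i) \<inter> T))"
    by (rule face_at_flip_restrict)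
  also have "sym_diff X (row_flip A i) \<inter> T = sym_diff X (row_flip A i \<inter> T) \<inter> T"
    by blast
  finally show ?thesis by (simp only: face_at_flip_restrict[symmetric])
qed

lemma face_at_subset_facet:
  assumes "signed T q"
  shows "face_at T q \<subseteq> facet (i, b) \<longleftrightarrow> i \<in> T \<and> q $ i = (if b then 1/4 else - (1/4))"
proof
  assume sub: "face_at T q \<subseteq> facet (i, b)"
  show "i \<in> T \<and> q $ i = (if b then 1/4 else - (1/4))"
  proof (cases "i \<in> T")
    case True
    have "q \<in> face_at T q" using assms by (simp add: face_at_def signed_def)
    with sub True show ?thesis by (auto simp: facet_def)
  next
    case False
    let ?z = "\<chi> k. if k = i then 0 else q $ k"
    have "?z \<in> face_at T q" using assms False by (auto simp: face_at_def signed_def cube_iff)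
    with sub have "?z \<in> facet (i, b)" by blast
    then show ?thesis by (simp add: facet_def split: if_splits)
  qed
next
  assume "i \<in> T \<and> q $ i = (if b then 1/4 else - (1/4))"
  then show "face_at T q \<subseteq> facet (i, b)" by (auto simp: face_at_def facet_def)
qed

lemma inj_on_flip_face_at:
  assumes "signed T q"
  shows "inj_on (\<lambda>X. face_at T (flip q X)) (Pow T)"
proof (rule inj_onI)
  fix X Y assume XY: "X \<in> Pow T" "Y \<in> Pow T" "face_at T (flip q X) = face_at T (flip q Y)"
  have "flip q X \<in> face_at T (flip q X)" using assms by (simp add: face_at_def signed_def)
  then have "flip q X \<in> face_at T (flip q Y)" using XY(3) by simp
  then have eq: "\<forall>i\<in>T. flip q X $ i = flip q Y $ i" by (simp add: face_at_def)
  have "q $ i \<noteq> 0" if "i \<in> T" for i using assms that by (auto simp: signed_def)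
  then show "X = Y" using eq XY(1,2) by (auto split: if_splits)
qed

inductive_set reach :: "bit ^ 'n ^ 'n \<Rightarrow> 'n set \<Rightarrow> 'n set set" for A T where
  empty: "{} \<in> reach A T"
| step: "X \<in> reach A T \<Longrightarrow> i \<in> T \<Longrightarrow> sym_diff X (row_flip A i \<inter> T) \<in> reach A T"

lemma reach_subset_Pow: "reach A T \<subseteq> Pow T"
proof
  fix X assume "X \<in> reach A T"
  then show "X \<in> Pow T" by induction auto
qed

lemma valid_comp_append:
  "valid_comp A (ks @ [k]) f \<longleftrightarrow> valid_comp A ks f \<and> compose_tau A ks f \<subseteq> facet k"
  by (induction ks arbitrary: f) auto

lemma compose_tau_append: "compose_tau A (ks @ [k]) f = tau A (fst k) ` compose_tau A ks f"
  by (induction ks arbitrary: f) auto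

lemma reach_if_valid_comp:
  assumes "valid_comp A ks (face_at T q)" "signed T q"
  shows "\<exists>X\<in>reach A T. compose_tau A ks (face_at T q) = face_at T (flip q X)"
  using assms
proof (induction ks arbitrary: q)
  case Nil
  then show ?case using reach.empty by force
next
  case (Cons k ks)
  obtain i b where k: "k = (i, b)" by (cases k)
  have "i \<in> T" using Cons.prems face_at_subset_facet k by auto
  define R where "R = row_flip A i \<inter> T"
  have img: "tau A i ` face_at T q = face_at T (flip q R)"
    using image_tau_face_at[of A i T q "{}"] by (simp add: R_def)
  obtain X where X: "X \<in> reach A T" "compose_tau A ks (face_at T (flip q R)) = face_at T (flip (flip q R) X)"
    using Cons.IH[of "flip q R"] Cons.prems img k by auto
  have "sym_diff X R \<in> reach A T" using X(1) \<open>i \<in> T\<close> unfolding R_def by (rule reach.step)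
  moreover have "sym_diff R X = sym_diff X R" by blast
  ultimately show ?case using X(2) img k by auto
qed

lemma valid_comp_if_reach:
  assumes "X \<in> reach A T" "signed T q"
  shows "\<exists>ks. valid_comp A ks (face_at T q) \<and> compose_tau A ks (face_at T q) = face_at T (flip q X)"
  using assms(1)
proof induction
  case empty
  then show ?case by (metis compose_tau.simps(1) valid_comp.simps(1) flip_empty)
next
  case (step X i)
  then obtain ks where ks: "valid_comp A ks (face_at T q)" "compose_tau A ks (face_at T q) = face_at T (flip q X)"
    by blast
  have sg: "signed T (flip q X)" using assms(2) by simp
  define b where "b = (flip q X $ i > 0)"
  have "\<bar>flip q X $ i\<bar> = 1/4" using sg step.hyps(2) by (simp add: signed_def)
  then have "flip q X $ i = (if b then 1/4 else - (1/4))" unfolding b_def by (rule abs_eq_quarter)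
  then have "face_at T (flip q X) \<subseteq> facet (i, b)" using face_at_subset_facet[OF sg] step.hyps(2) by blast
  then have "valid_comp A (ks @ [(i, b)]) (face_at T q)" using ks by (simp add: valid_comp_append)
  moreover have "compose_tau A (ks @ [(i, b)]) (face_at T q) = face_at T (flip q (sym_diff X (row_flip A i \<inter> T)))"
    using ks by (simp add: compose_tau_append image_tau_face_at)
  ultimately show ?case by blast
qed

lemma face_family_face_at:
  assumes "signed T q"
  shows "face_family A (face_at T q) = (\<lambda>X. face_at T (flip q X)) ` reach A T"
  using reach_if_valid_comp[OF _ assms] valid_comp_if_reach[OF _ assms]
  unfolding face_family_def by (fastforce simp: image_iff)

lemma card_face_family:
  assumes "signed T q"
  shows "card (face_family A (face_at T q)) = card (reach A T)"
  unfolding face_family_face_at[OF assms]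
  by (rule card_image[OF inj_on_subset[OF inj_on_flip_face_at[OF assms] reach_subset_Pow]])

lemma perfect_iff_reach_all:
  fixes A :: "bit ^ 'n ^ 'n"
  shows "perfect A \<longleftrightarrow> (\<forall>T. T \<noteq> {} \<longrightarrow> reach A T = Pow T)"
proof -
  have card_eq: "card (reach A T) = 2 ^ card T \<longleftrightarrow> reach A T = Pow T" for T
    using reach_subset_Pow[of A T] by (metis card_Pow card_seteq finite_Pow_iff finite order_refl)
  have "\<exists>q. signed T q" for T :: "'n set"
    by (rule exI[of _ "\<chi> k. if k \<in> T then 1/4 else 0"]) (simp add: signed_def cube_iff)
  then show ?thesis
    unfolding perfect_def proper_face_iff using card_eq card_face_family codim_face_at by metis
qed

lemma bott_matrix_rank:
  fixes A :: "bit ^ 'n ^ 'n"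
  assumes "bott_matrix A"
  obtains \<rho> :: "'n \<Rightarrow> nat" where "\<And>x. \<rho> x < CARD('n)" "inj \<rho>"
    "\<And>x y. A $ x $ y \<noteq> 0 \<Longrightarrow> \<rho> x < \<rho> y"
proof -
  obtain \<sigma> :: "nat \<Rightarrow> 'n" where bij: "bij_betw \<sigma> {0..<CARD('n)} UNIV"
    and ord: "\<forall>i < CARD('n). \<forall>k < CARD('n). A $ (\<sigma> i) $ (\<sigma> k) \<noteq> 0 \<longrightarrow> i < k"
    using assms unfolding bott_matrix_def by blast
  define \<rho> where "\<rho> = the_inv_into {0..<CARD('n)} \<sigma>"
  have "bij_betw \<rho> UNIV {0..<CARD('n)}" unfolding \<rho>_def by (rule bij_betw_the_inv_into[OF bij])
  then have "\<rho> x < CARD('n)" "inj \<rho>" for x by (auto simp: bij_betw_def)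
  moreover have "\<sigma> (\<rho> x) = x" for x unfolding \<rho>_def by (rule f_the_inv_into_f_bij_betw[OF bij]) simp
  ultimately show ?thesis using that ord by metis
qed

text \<open>For a Bott matrix every pattern X \<subseteq> T is reachable: the move at the element x of X of
  least rank removes x and only changes coordinates of larger rank, so induction on the
  lower rank bound b of the pattern applies.\<close>
lemma reach_all_if_bott:
  fixes A :: "bit ^ 'n ^ 'n"
  assumes "bott_matrix A"
  shows "reach A T = Pow T"
proof -
  obtain \<rho> :: "'n \<Rightarrow> nat" where rank_bound: "\<And>x. \<rho> x < CARD('n)" and "inj \<rho>"
    and rank_incr: "\<And>x y. A $ x $ y \<noteq> 0 \<Longrightarrow> \<rho> x < \<rho> y"
    using bott_matrix_rank[OF assms] by blast
  have "\<forall>X. X \<subseteq> T \<longrightarrow> (\<forall>x\<in>X. b \<le> \<rho> x) \<longrightarrow> X \<in> reach A T" if "b \<le> CARD('n)" for b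
    using that
  proof (induction b rule: inc_induct)
    case base
    then show ?case using rank_bound reach.empty by (metis all_not_in_conv leD)
  next
    case (step b)
    show ?case
    proof (intro allI impI)
      fix X assume XT: "X \<subseteq> T" and X_rank: "\<forall>x\<in>X. b \<le> \<rho> x"
      show "X \<in> reach A T"
      proof (cases "\<exists>x\<in>X. \<rho> x = b")
        case False
        then show ?thesis using step.IH XT X_rank by (metis Suc_leI le_neq_implies_less)
      next
        case True
        then obtain x where x: "x \<in> X" "\<rho> x = b" by blast
        define X' where "X' = sym_diff X (row_flip A x \<inter> T)"
        have "x \<in> row_flip A x \<inter> T" using x(1) XT by (auto simp: row_flip_def)
        then have "y \<noteq> x" if "y \<in> X'" for y using that x(1) by (auto simp: X'_def)
        moreover have "b < \<rho> y" if "y \<in> row_flip A x" "y \<noteq> x" for y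
          using rank_incr[of x y] x(2) that by (simp add: row_flip_def)
        moreover have "b < \<rho> y" if "y \<in> X" "y \<noteq> x" for y
          using X_rank x(2) \<open>inj \<rho>\<close> that by (metis inj_eq le_neq_implies_less)
        ultimately have "\<forall>y\<in>X'. Suc b \<le> \<rho> y" by (auto simp: X'_def Suc_le_eq)
        moreover have "X' \<subseteq> T" using XT by (auto simp: X'_def)
        ultimately have "X' \<in> reach A T" using step.IH by blast
        then have "sym_diff X' (row_flip A x \<inter> T) \<in> reach A T" using x(1) XT by (blast intro: reach.step)
        moreover have "sym_diff X' (row_flip A x \<inter> T) = X" using XT by (auto simp: X'_def)
        ultimately show ?thesis by simp
      qed
    qed
  qed
  then show ?thesis using reach_subset_Pow by blast
qed

text \<open>If every nonempty set of indices contains a row vanishing on it (a sink), the indices can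
  be ordered so that A becomes strictly upper triangular: remove sinks one at a time.\<close>
lemma sink_ordering:
  fixes A :: "bit ^ 'n ^ 'n"
  assumes sink: "\<And>U. U \<noteq> {} \<Longrightarrow> \<exists>v\<in>U. \<forall>w\<in>U. A $ v $ w = 0"
  shows "\<exists>\<sigma>. bij_betw \<sigma> {0..<card U} U \<and>
           (\<forall>i<card U. \<forall>k<card U. A $ (\<sigma> i) $ (\<sigma> k) \<noteq> 0 \<longrightarrow> i < k)"
proof (induction "card U" arbitrary: U)
  case 0
  then have "U = {}" by simp
  then show ?case by (simp add: bij_betw_def)
next
  case (Suc m)
  then have "U \<noteq> {}" by auto
  then obtain v where v: "v \<in> U" "\<forall>w\<in>U. A $ v $ w = 0" using sink by blast
  have "card (U - {v}) = m" using Suc.hyps(2) v(1) by simp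
  then obtain \<sigma>' where \<sigma>': "bij_betw \<sigma>' {0..<m} (U - {v})"
    "\<forall>i<m. \<forall>k<m. A $ (\<sigma>' i) $ (\<sigma>' k) \<noteq> 0 \<longrightarrow> i < k"
    using Suc.hyps(1) by metis
  define \<sigma> where "\<sigma> = \<sigma>'(m := v)"
  have "bij_betw \<sigma> {0..<m} (U - {v})"
    using \<sigma>'(1) unfolding \<sigma>_def by (rule bij_betw_cong[THEN iffD1, rotated]) auto
  moreover have "bij_betw \<sigma> {m} {v}" by (simp add: \<sigma>_def)
  ultimately have "bij_betw \<sigma> ({0..<m} \<union> {m}) ((U - {v}) \<union> {v})"
    by (rule bij_betw_combine) auto
  moreover have "{0..<m} \<union> {m} = {0..<Suc m}" "(U - {v}) \<union> {v} = U" using v(1) by auto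
  ultimately have bij: "bij_betw \<sigma> {0..<Suc m} U" by simp
  have "A $ (\<sigma> i) $ (\<sigma> k) \<noteq> 0 \<longrightarrow> i < k" if "i < Suc m" "k < Suc m" for i k
  proof (cases "i = m")
    case True
    have "\<sigma> k \<in> U" using bij that(2) by (auto simp: bij_betw_def)
    then show ?thesis using True v(2) by (simp add: \<sigma>_def)
  next
    case False
    then show ?thesis using that \<sigma>'(2) by (cases "k = m") (simp_all add: \<sigma>_def)
  qed
  then show ?case using bij Suc.hyps(2) by metis
qed

lemma bott_matrix_if_sinks:
  fixes A :: "bit ^ 'n ^ 'n"
  assumes "\<And>U. U \<noteq> {} \<Longrightarrow> \<exists>v\<in>U. \<forall>w\<in>U. A $ v $ w = 0"
  shows "bott_matrix A"
  using sink_ordering[OF assms, of UNIV] unfolding bott_matrix_def by simp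

text \<open>A non-Bott matrix with zero diagonal contains an induced cycle: a nonempty T in which every
  row has exactly one entry 1.  Take T minimal among nonempty sets without sinks; removing
  any u from T creates a row w whose only entry 1 in T is at u, and u \<mapsto> w is injective,
  hence onto T.\<close>
lemma induced_cycle:
  fixes A :: "bit ^ 'n ^ 'n"
  assumes "\<not> bott_matrix A" and diag: "\<forall>i. A $ i $ i = 0"
  obtains T where "T \<noteq> {}" "\<And>v. v \<in> T \<Longrightarrow> \<exists>u. u \<noteq> v \<and> {w \<in> T. A $ v $ w = 1} = {u}"
proof -
  define no_sink where "no_sink U \<longleftrightarrow> U \<noteq> {} \<and> (\<forall>v\<in>U. \<exists>w\<in>U. A $ v $ w = 1)" for U
  define succ where "succ v T = {w \<in> T. A $ v $ w = 1}" for v T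
  have "\<exists>U. no_sink U"
  proof (rule ccontr)
    assume "\<nexists>U. no_sink U"
    then have "\<exists>v\<in>U. \<forall>w\<in>U. A $ v $ w = 0" if "U \<noteq> {}" for U
      using that unfolding no_sink_def by auto
    then show False using assms(1) bott_matrix_if_sinks by blast
  qed
  then obtain T where T: "no_sink T" and T_min: "\<And>U. no_sink U \<Longrightarrow> card T \<le> card U"
    using ex_has_least_nat[of no_sink _ card] by blast
  have "\<exists>w. w \<in> T \<and> w \<noteq> u \<and> succ w T = {u}" if u: "u \<in> T" for u
  proof -
    have "T \<noteq> {u}" using T diag by (auto simp: no_sink_def)
    then have "T - {u} \<noteq> {}" using u by blast
    moreover have "card (T - {u}) < card T" using u by (intro card_Diff1_less) simp_all
    ultimately have "\<not> no_sink (T - {u})" using T_min by (meson leD)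
    then obtain w where w: "w \<in> T" "w \<noteq> u" "\<forall>x\<in>T - {u}. A $ w $ x \<noteq> 1"
      using \<open>T - {u} \<noteq> {}\<close> unfolding no_sink_def by blast
    moreover have "\<exists>x\<in>T. A $ w $ x = 1" using T w(1) by (auto simp: no_sink_def)
    ultimately have "succ w T = {u}" using u unfolding succ_def by blast
    then show ?thesis using w by blast
  qed
  then obtain W where W_in: "\<And>u. u \<in> T \<Longrightarrow> W u \<in> T"
    and W_ne: "\<And>u. u \<in> T \<Longrightarrow> W u \<noteq> u" and W_succ: "\<And>u. u \<in> T \<Longrightarrow> succ (W u) T = {u}"
    by metis
  have "inj_on W T"
  proof (rule inj_onI)
    fix u u' assume "u \<in> T" "u' \<in> T" "W u = W u'"
    then have "{u} = {u'}" using W_succ by metis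
    then show "u = u'" by simp
  qed
  moreover have "W ` T \<subseteq> T" using W_in by auto
  ultimately have onto: "W ` T = T" by (simp add: endo_inj_surj)
  show ?thesis
  proof (rule that)
    show "T \<noteq> {}" using T by (simp add: no_sink_def)
    fix v assume "v \<in> T"
    then obtain u where u: "u \<in> T" "v = W u" using onto by blast
    then have "u \<noteq> v" "succ v T = {u}" using W_ne[of u] W_succ[of u] by auto
    then show "\<exists>u. u \<noteq> v \<and> {w \<in> T. A $ v $ w = 1} = {u}" by (auto simp: succ_def)
  qed
qed

lemma even_card_sym_diff:
  assumes "finite X" "finite Y"
  shows "even (card (sym_diff X Y)) \<longleftrightarrow> even (card X + card Y)"
proof -
  have "card (sym_diff X Y) = card (X \<union> Y) - card (X \<inter> Y)"
    using assms by (subst card_Diff_subset[symmetric]) (auto intro: arg_cong[where f = card])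
  moreover have "card X + card Y = card (X \<union> Y) + card (X \<inter> Y)"
    using assms by (rule card_Un_Int)
  moreover have "card (X \<inter> Y) \<le> card (X \<union> Y)" using assms by (intro card_mono) auto
  ultimately show ?thesis by auto
qed

lemma reach_even:
  assumes even_rows: "\<And>v. v \<in> T \<Longrightarrow> even (card (row_flip A v \<inter> T))"
    and "X \<in> reach A T"
  shows "even (card X)"
  using assms(2)
proof induction
  case empty
  then show ?case by simp
next
  case (step X i)
  have "finite X" using reach_subset_Pow[of A T] step.hyps(1) by (auto intro: finite_subset)
  then show ?case using step.IH even_rows[OF step.hyps(2)] by (simp add: even_card_sym_diff)
qed

text \<open>On an induced cycle every move changes exactly two coordinates of T, so the singleton
  patterns are unreachable.\<close>
lemma not_reach_all_if_not_bott:
  fixes A :: "bit ^ 'n ^ 'n"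
  assumes "\<not> bott_matrix A" and "\<forall>i. A $ i $ i = 0"
  obtains T where "T \<noteq> {}" "reach A T \<noteq> Pow T"
proof -
  obtain T where T: "T \<noteq> {}" and cyc: "\<And>v. v \<in> T \<Longrightarrow> \<exists>u. u \<noteq> v \<and> {w \<in> T. A $ v $ w = 1} = {u}"
    using induced_cycle[OF assms] by blast
  have "even (card (row_flip A v \<inter> T))" if v: "v \<in> T" for v
  proof -
    obtain u where u: "u \<noteq> v" "{w \<in> T. A $ v $ w = 1} = {u}" using cyc[OF v] by blast
    have "row_flip A v \<inter> T = insert v {w \<in> T. A $ v $ w = 1}" using v by (auto simp: row_flip_def)
    then show ?thesis using u by simp
  qed
  moreover obtain t where "t \<in> T" using T by blast
  ultimately have "{t} \<notin> reach A T" using reach_even[of T A "{t}"] by auto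
  then show ?thesis using that T \<open>t \<in> T\<close> by blast
qed

theorem mainTheorem12:
  fixes A :: "bit ^ 'n ^ 'n"
  assumes "CARD('n) \<ge> 2"
    and "\<forall>i. A $ i $ i = 0"
  shows "perfect A \<longleftrightarrow> bott_matrix A"
proof
  assume "perfect A"
  then have "\<And>T. T \<noteq> {} \<Longrightarrow> reach A T = Pow T" by (simp add: perfect_iff_reach_all)
  then show "bott_matrix A" using not_reach_all_if_not_bott[OF _ assms(2)] by metis
next
  assume "bott_matrix A"
  then show "perfect A" by (simp add: perfect_iff_reach_all reach_all_if_bott)
qed

end
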